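(* Let $A$ be a finite set of options containing a distinguished default option $0$, and let $\mathcal{L}$ be the set of all Llull matrices on $A$, viewed as a subset of a finite-dimensional real space. For $v\in\mathcal{L}$ let $W(v)$ denote the set of path-revised approval choices of $v$. Then $W$ is upper semicontinuous on $\mathcal{L}$: every $v\in\mathcal{L}$ has a neighbourhood $U$ such that $W(w)\subseteq W(v)$ for every $w\in U\cap\mathcal{L}$.
   Context: A Llull matrix on $A$ is a family of real numbers $v_{xy}\in[0,1]$, indexed by ordered pairs $(x,y)$ of distinct elements of $A$, with $v_{xy}+v_{yx}\le1$. Path scores: $v^*_{xy}=\max\min(v_{x_0x_1},\dots,v_{x_{m-1}x_m})$ over all paths $x_0\dots x_m$ ($m\ge1$, $x_0=x$, $x_m=y$, $x_i$ pairwise distinct). For $z\in A$ put $D_v(z)=v^*_{z0}-v^*_{0z}$ if $z\ne0$ and $D_v(0)=0$. An option $x\in A$ is a path-revised approval choice of $v$ if $D_v(x)\ge D_v(y)$ for all $y\in A\setminus\{x\}$; $W(v)$ is the set of these options. *)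

theory Defs
  imports Main "HOL-Analysis.Analysis"
begin

definition llull :: "'a set \<Rightarrow> ('a \<Rightarrow> 'a \<Rightarrow> real) \<Rightarrow> bool" where
  "llull A v \<longleftrightarrow> (\<forall>x\<in>A. \<forall>y\<in>A. x \<noteq> y \<longrightarrow>
      0 \<le> v x y \<and> v x y \<le> 1 \<and> v x y + v y x \<le> 1)"

definition paths :: "'a set \<Rightarrow> 'a \<Rightarrow> 'a \<Rightarrow> 'a list set" where
  "paths A x y = {xs. 2 \<le> length xs \<and> distinct xs \<and> set xs \<subseteq> A \<and>
      hd xs = x \<and> last xs = y}"

definition path_min :: "('a \<Rightarrow> 'a \<Rightarrow> real) \<Rightarrow> 'a list \<Rightarrow> real" where
  "path_min v xs = Min (set (map (\<lambda>(a, b). v a b) (zip xs (tl xs))))"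

definition path_score :: "'a set \<Rightarrow> ('a \<Rightarrow> 'a \<Rightarrow> real) \<Rightarrow> 'a \<Rightarrow> 'a \<Rightarrow> real" where
  "path_score A v x y = Max (path_min v ` paths A x y)"

definition Dv :: "'a set \<Rightarrow> 'a \<Rightarrow> ('a \<Rightarrow> 'a \<Rightarrow> real) \<Rightarrow> 'a \<Rightarrow> real" where
  "Dv A o0 v z = (if z = o0 then 0 else path_score A v z o0 - path_score A v o0 z)"

definition Wch :: "'a set \<Rightarrow> 'a \<Rightarrow> ('a \<Rightarrow> 'a \<Rightarrow> real) \<Rightarrow> 'a set" where
  "Wch A o0 v = {x\<in>A. \<forall>y\<in>A - {x}. Dv A o0 v x \<ge> Dv A o0 v y}"

end

theory Submission
  imports Defs
begin

text \<open>
  Perturbing every entry of a matrix by at most e moves the minimum along any path,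
  hence every path score, by at most e, so each D value moves by at most 2e.
  Options outside W(v) fall short of max D by a positive gap; once the perturbation
  is small against that gap they cannot become maximizers of the perturbed D.
\<close>

lemma Min_image_le_add:
  fixes f g :: "'b \<Rightarrow> 'a::linordered_ab_group_add"
  assumes "finite S" "S \<noteq> {}" "\<And>s. s \<in> S \<Longrightarrow> f s \<le> g s + e"
  shows "Min (f ` S) \<le> Min (g ` S) + e"
proof -
  have "Min (g ` S) \<in> g ` S" using assms by simp
  then obtain s where s: "s \<in> S" "Min (g ` S) = g s" by auto
  have "Min (f ` S) \<le> f s" using assms s by auto
  also have "\<dots> \<le> g s + e" using assms(3) s(1) .
  finally show ?thesis using s(2) by simp
qed

lemma Max_image_le_add:
  fixes f g :: "'b \<Rightarrow> 'a::linordered_ab_group_add"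
  assumes "finite S" "S \<noteq> {}" "\<And>s. s \<in> S \<Longrightarrow> f s \<le> g s + e"
  shows "Max (f ` S) \<le> Max (g ` S) + e"
proof -
  have "Max (f ` S) \<in> f ` S" using assms by simp
  then obtain s where s: "s \<in> S" "Max (f ` S) = f s" by auto
  have "Max (f ` S) \<le> g s + e" using assms(3) s by simp
  also have "\<dots> \<le> Max (g ` S) + e" using assms s by auto
  finally show ?thesis .
qed

definition maximizers :: "'a set \<Rightarrow> ('a \<Rightarrow> real) \<Rightarrow> 'a set" where
  "maximizers A f = {x\<in>A. \<forall>y\<in>A - {x}. f y \<le> f x}"

lemma maximizers_subset_if_close:
  fixes f :: "'a \<Rightarrow> real"
  assumes "finite A"
  shows "\<exists>\<delta>>0. \<forall>g. (\<forall>z\<in>A. \<bar>g z - f z\<bar> < \<delta>) \<longrightarrow> maximizers A g \<subseteq> maximizers A f"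
proof -
  define M where "M = Max (f ` A)"
  \<comment> \<open>the 1 keeps the set nonempty when every point of A maximizes f\<close>
  define \<delta> where "\<delta> = Min (insert 1 ((\<lambda>x. (M - f x) / 2) ` {x\<in>A. f x < M}))"
  have "\<delta> > 0"
    unfolding \<delta>_def using assms by (subst Min_gr_iff) auto
  moreover have "maximizers A g \<subseteq> maximizers A f" if close: "\<forall>z\<in>A. \<bar>g z - f z\<bar> < \<delta>" for g
  proof
    fix x assume x: "x \<in> maximizers A g"
    then have "x \<in> A" by (simp add: maximizers_def)
    then have fx_le: "f x \<le> M" and "A \<noteq> {}"
      using assms by (auto simp: M_def)
    then have "M \<in> f ` A" using assms by (simp add: M_def)
    then obtain m where m: "m \<in> A" "f m = M" by auto
    have "f x = M"
    proof (rule ccontr)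
      assume "f x \<noteq> M"
      with fx_le have "f x < M" by simp
      then have "\<delta> \<le> (M - f x) / 2"
        unfolding \<delta>_def using assms \<open>x \<in> A\<close> by (intro Min_le) auto
      have "m \<noteq> x" using m \<open>f x < M\<close> by auto
      then have "g m \<le> g x" using x m by (auto simp: maximizers_def)
      moreover have "\<bar>g x - f x\<bar> < \<delta>" "\<bar>g m - f m\<bar> < \<delta>"
        using close m(1) \<open>x \<in> A\<close> by auto
      ultimately show False
        using m(2) \<open>\<delta> \<le> (M - f x) / 2\<close> by (simp add: abs_less_iff)
    qed
    then show "x \<in> maximizers A f"
      using \<open>x \<in> A\<close> assms by (auto simp: maximizers_def M_def)
  qed
  ultimately show ?thesis by blast
qed

lemma distinct_zip_tl_edge:
  assumes "distinct xs" "(a, b) \<in> set (zip xs (tl xs))"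
  shows "a \<in> set xs" "b \<in> set xs" "a \<noteq> b"
proof -
  show "a \<in> set xs" using assms(2) by (meson set_zip_leftD)
  show "b \<in> set xs" using assms(2) by (cases xs) (auto dest: set_zip_rightD)
  obtain n where n: "xs ! n = a" "xs ! Suc n = b" "Suc n < length xs"
    using assms(2) by (auto simp: in_set_zip nth_tl)
  then show "a \<noteq> b" using assms(1) by (metis nth_eq_iff_index_eq n_not_Suc_n Suc_lessD)
qed

lemma finite_paths:
  assumes "finite A"
  shows "finite (paths A x y)"
proof -
  have "paths A x y \<subseteq> {xs. set xs \<subseteq> A \<and> length xs \<le> card A}"
    unfolding paths_def using assms by (auto simp: card_mono distinct_card[symmetric])
  then show ?thesis using finite_lists_length_le[OF assms] by (rule finite_subset)
qed

lemma path_min_le_add: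
  assumes "xs \<in> paths A x y" "\<And>a b. a \<in> A \<Longrightarrow> b \<in> A \<Longrightarrow> a \<noteq> b \<Longrightarrow> w a b \<le> v a b + e"
  shows "path_min w xs \<le> path_min v xs + e"
proof -
  have xs: "distinct xs" "set xs \<subseteq> A" "2 \<le> length xs"
    using assms(1) by (auto simp: paths_def)
  then obtain a b r where "xs = a # b # r"
    by (metis Suc_le_length_iff numeral_2_eq_2)
  then have "set (zip xs (tl xs)) \<noteq> {}" by simp
  moreover have "w a b \<le> v a b + e" if "(a, b) \<in> set (zip xs (tl xs))" for a b
    using distinct_zip_tl_edge[OF xs(1) that] xs(2) assms(2) by auto
  ultimately show ?thesis
    unfolding path_min_def by (auto simp: image_image intro: Min_image_le_add)
qed

lemma path_score_le_add:
  assumes "finite A" "x \<in> A" "y \<in> A" "x \<noteq> y"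
    and "\<And>a b. a \<in> A \<Longrightarrow> b \<in> A \<Longrightarrow> a \<noteq> b \<Longrightarrow> w a b \<le> v a b + e"
  shows "path_score A w x y \<le> path_score A v x y + e"
proof -
  have "[x, y] \<in> paths A x y" using assms by (auto simp: paths_def)
  then have "paths A x y \<noteq> {}" by auto
  then show ?thesis
    unfolding path_score_def
    by (rule Max_image_le_add[OF finite_paths[OF assms(1)]]) (rule path_min_le_add[OF _ assms(5)])
qed

lemma Dv_abs_diff_le:
  assumes "finite A" "o0 \<in> A" "z \<in> A" "0 \<le> e"
    and close: "\<And>a b. a \<in> A \<Longrightarrow> b \<in> A \<Longrightarrow> a \<noteq> b \<Longrightarrow> \<bar>w a b - v a b\<bar> \<le> e"
  shows "\<bar>Dv A o0 w z - Dv A o0 v z\<bar> \<le> 2 * e"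
proof (cases "z = o0")
  case True
  then show ?thesis using \<open>0 \<le> e\<close> by (simp add: Dv_def)
next
  case False
  have wv: "w a b \<le> v a b + e" and vw: "v a b \<le> w a b + e"
    if "a \<in> A" "b \<in> A" "a \<noteq> b" for a b
    using close[OF that] by (simp_all add: abs_le_iff)
  have "o0 \<noteq> z" using False by simp
  with False path_score_le_add[of A z o0 w v e, OF assms(1,3,2) False wv]
    path_score_le_add[of A z o0 v w e, OF assms(1,3,2) False vw]
    path_score_le_add[of A o0 z w v e, OF assms(1,2,3) \<open>o0 \<noteq> z\<close> wv]
    path_score_le_add[of A o0 z v w e, OF assms(1,2,3) \<open>o0 \<noteq> z\<close> vw]
  show ?thesis by (simp add: Dv_def abs_le_iff)
qed

lemma Wch_eq_maximizers: "Wch A o0 v = maximizers A (Dv A o0 v)"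
  by (simp add: Wch_def maximizers_def)

theorem theorem3p3:
  fixes A :: "'a set" and o0 :: 'a and v :: "'a \<Rightarrow> 'a \<Rightarrow> real"
  assumes "finite A" and "o0 \<in> A" and "llull A v"
  shows "\<exists>\<epsilon>>0. \<forall>w. llull A w \<and>
           (\<forall>x\<in>A. \<forall>y\<in>A. x \<noteq> y \<longrightarrow> \<bar>w x y - v x y\<bar> < \<epsilon>)
           \<longrightarrow> Wch A o0 w \<subseteq> Wch A o0 v"
proof -
  obtain \<delta> where "\<delta> > 0" and stable:
    "\<And>g. \<forall>z\<in>A. \<bar>g z - Dv A o0 v z\<bar> < \<delta> \<Longrightarrow> maximizers A g \<subseteq> maximizers A (Dv A o0 v)"
    using maximizers_subset_if_close[OF assms(1)] by blast
  have "Wch A o0 w \<subseteq> Wch A o0 v"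
    if "\<forall>x\<in>A. \<forall>y\<in>A. x \<noteq> y \<longrightarrow> \<bar>w x y - v x y\<bar> < \<delta> / 3" for w
  proof -
    have "\<bar>Dv A o0 w z - Dv A o0 v z\<bar> \<le> 2 * (\<delta> / 3)" if "z \<in> A" for z
      using \<open>\<delta> > 0\<close> \<open>\<forall>x\<in>A. _\<close>
      by (intro Dv_abs_diff_le[OF assms(1,2) that]) (auto simp: less_imp_le)
    with \<open>\<delta> > 0\<close> have "\<forall>z\<in>A. \<bar>Dv A o0 w z - Dv A o0 v z\<bar> < \<delta>" by force
    then show ?thesis unfolding Wch_eq_maximizers by (rule stable)
  qed
  with \<open>\<delta> > 0\<close> show ?thesis by (intro exI[of _ "\<delta> / 3"]) auto
qed

end
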